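(* Let $X=\{x_1,\dots,x_n\}$ be a finite $T_0$-space admitting a free action of a finite group $G$ by homeomorphisms. Then $\sum_{i=1}^{n}|U_{x_i}|$ and $\sum_{i=1}^{n}|F_{x_i}|$ are multiples of $|G|$.
   Context: For $x\in X$, $U_x$ is the intersection of all open sets containing $x$ and $F_x$ is the intersection of all closed sets containing $x$; equivalently, in the associated poset ($x\le y$ iff $U_x\subseteq U_y$), $U_x=\{y:y\le x\}$ and $F_x=\{y:y\ge x\}$. *)

theory Defs
  imports "HOL-Analysis.Analysis" "HOL-Algebra.Group_Action"
begin

text \<open>U_x: intersection of all open sets containing x; F_x: intersection of all closed sets containing x.\<close>
definition minimal_open :: "'a topology \<Rightarrow> 'a \<Rightarrow> 'a set" where
  "minimal_open X x = \<Inter>{U. openin X U \<and> x \<in> U}"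

definition minimal_closed :: "'a topology \<Rightarrow> 'a \<Rightarrow> 'a set" where
  "minimal_closed X x = \<Inter>{C. closedin X C \<and> x \<in> C}"

end

theory Submission
  imports Defs
begin

text \<open>A free action of \<open>G\<close> splits \<open>X\<close> into orbits of exactly \<open>|G|\<close> points. Homeomorphisms
  carry the minimal open (closed) set of a point onto that of its image, so \<open>|U\<^sub>x|\<close> and
  \<open>|F\<^sub>x|\<close> are constant along orbits, and each sum is a sum of orbit sums of the form
  \<open>|G| \<cdot> c\<close>.\<close>

lemma image_Inter_containing_sets:
  assumes inj: "inj_on f S" and surj: "f ` S = T"
    and P_sub: "\<And>U. P U \<Longrightarrow> U \<subseteq> S" and Q_sub: "\<And>V. Q V \<Longrightarrow> V \<subseteq> T"
    and Q_image: "\<And>U. U \<subseteq> S \<Longrightarrow> Q (f ` U) \<longleftrightarrow> P U"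
    and "P S" and x: "x \<in> S"
  shows "f ` \<Inter>{U. P U \<and> x \<in> U} = \<Inter>{V. Q V \<and> f x \<in> V}"
proof -
  have family: "{V. Q V \<and> f x \<in> V} = (`) f ` {U. P U \<and> x \<in> U}"
  proof
    show "{V. Q V \<and> f x \<in> V} \<subseteq> (`) f ` {U. P U \<and> x \<in> U}"
    proof
      fix V assume V: "V \<in> {V. Q V \<and> f x \<in> V}"
      define U where "U = S \<inter> f -` V"
      have "V = f ` U" using V Q_sub surj unfolding U_def by blast
      moreover have "P U" "x \<in> U"
        using V Q_image[of U] x \<open>V = f ` U\<close> unfolding U_def by auto
      ultimately show "V \<in> (`) f ` {U. P U \<and> x \<in> U}" by blast
    qed
    show "(`) f ` {U. P U \<and> x \<in> U} \<subseteq> {V. Q V \<and> f x \<in> V}"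
      using Q_image P_sub by auto
  qed
  have "f ` \<Inter>{U. P U \<and> x \<in> U} = (\<Inter>U\<in>{U. P U \<and> x \<in> U}. f ` U)"
    using image_INT[OF inj, of "{U. P U \<and> x \<in> U}" id] P_sub \<open>P S\<close> x by auto
  then show ?thesis using family by simp
qed

lemma homeomorphic_map_minimal_open:
  assumes f: "homeomorphic_map X Y f" and x: "x \<in> topspace X"
  shows "f ` minimal_open X x = minimal_open Y (f x)"
  unfolding minimal_open_def
  by (rule image_Inter_containing_sets[where P="openin X" and Q="openin Y",
        OF homeomorphic_imp_injective_map[OF f]
        homeomorphic_imp_surjective_map[OF f] openin_subset[of X] openin_subset[of Y]
        homeomorphic_map_openness[OF f] openin_topspace[of X] x])

lemma homeomorphic_map_minimal_closed:
  assumes f: "homeomorphic_map X Y f" and x: "x \<in> topspace X"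
  shows "f ` minimal_closed X x = minimal_closed Y (f x)"
  unfolding minimal_closed_def
  by (rule image_Inter_containing_sets[where P="closedin X" and Q="closedin Y",
        OF homeomorphic_imp_injective_map[OF f]
        homeomorphic_imp_surjective_map[OF f] closedin_subset[of X] closedin_subset[of Y]
        homeomorphic_map_closedness[OF f] closedin_topspace[of X] x])

lemma card_minimal_open_homeomorphic_map:
  assumes f: "homeomorphic_map X Y f" and x: "x \<in> topspace X"
  shows "card (minimal_open Y (f x)) = card (minimal_open X x)"
proof -
  have "minimal_open X x \<subseteq> topspace X" using x unfolding minimal_open_def by auto
  then have "inj_on f (minimal_open X x)"
    using homeomorphic_imp_injective_map[OF f] inj_on_subset by blast
  then show ?thesis using homeomorphic_map_minimal_open[OF f x] card_image by metis
qed

lemma card_minimal_closed_homeomorphic_map: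
  assumes f: "homeomorphic_map X Y f" and x: "x \<in> topspace X"
  shows "card (minimal_closed Y (f x)) = card (minimal_closed X x)"
proof -
  have "minimal_closed X x \<subseteq> topspace X" using x unfolding minimal_closed_def by auto
  then have "inj_on f (minimal_closed X x)"
    using homeomorphic_imp_injective_map[OF f] inj_on_subset by blast
  then show ?thesis using homeomorphic_map_minimal_closed[OF f x] card_image by metis
qed

lemma (in group_action) card_orbit_free:
  assumes free: "\<And>g. g \<in> carrier G \<Longrightarrow> \<phi> g x = x \<Longrightarrow> g = \<one>\<^bsub>G\<^esub>"
    and x: "x \<in> E" and fin: "finite (carrier G)"
  shows "card (orbit G \<phi> x) = order G"
proof -
  have "stabilizer G \<phi> x = {\<one>\<^bsub>G\<^esub>}"
    using free stabilizer_one_closed[OF x] unfolding stabilizer_def by auto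
  then show ?thesis using orbit_stabilizer_theorem[OF x] fin by simp
qed

lemma (in group_action) order_dvd_sum_invariant_free:
  assumes free: "\<And>g x. g \<in> carrier G \<Longrightarrow> x \<in> E \<Longrightarrow> \<phi> g x = x \<Longrightarrow> g = \<one>\<^bsub>G\<^esub>"
    and invariant: "\<And>g x. g \<in> carrier G \<Longrightarrow> x \<in> E \<Longrightarrow> f (\<phi> g x) = f x"
    and "finite E" and fin: "finite (carrier G)"
  shows "order G dvd (\<Sum>x\<in>E. f x :: nat)"
proof -
  have "order G dvd (\<Sum>y\<in>orb. f y)" if orb: "orb \<in> orbits G E \<phi>" for orb
  proof -
    obtain x where x: "x \<in> E" and orb: "orb = orbit G \<phi> x"
      using orb unfolding orbits_def by auto
    have "\<And>y. y \<in> orb \<Longrightarrow> f y = f x" using x invariant unfolding orb orbit_def by auto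
    then have "(\<Sum>y\<in>orb. f y) = card orb * f x" by simp
    then show ?thesis using card_orbit_free[OF free x fin] x orb by simp
  qed
  then have "order G dvd (\<Sum>orb\<in>orbits G E \<phi>. \<Sum>y\<in>orb. f y)" by (rule dvd_sum)
  then show ?thesis by (simp add: disjoint_sum[OF \<open>finite E\<close>])
qed

theorem mainTheorem19:
  fixes X :: "'a topology" and G :: "('g, 'm) monoid_scheme" and \<phi> :: "'g \<Rightarrow> 'a \<Rightarrow> 'a"
  assumes "finite (topspace X)"
    and "t0_space X"
    and "group G" and "finite (carrier G)"
    and "group_action G (topspace X) \<phi>"
    and "\<And>g. g \<in> carrier G \<Longrightarrow> homeomorphic_map X X (\<phi> g)"
    and "\<And>g x. g \<in> carrier G \<Longrightarrow> x \<in> topspace X \<Longrightarrow> \<phi> g x = x \<Longrightarrow> g = \<one>\<^bsub>G\<^esub>"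
  shows "order G dvd (\<Sum>x\<in>topspace X. card (minimal_open X x)) \<and>
         order G dvd (\<Sum>x\<in>topspace X. card (minimal_closed X x))"
proof -
  interpret group_action G "topspace X" \<phi> by (fact assms(5))
  have "order G dvd (\<Sum>x\<in>topspace X. card (minimal_open X x))"
    using assms(7) card_minimal_open_homeomorphic_map[OF assms(6)] assms(1,4)
    by (rule order_dvd_sum_invariant_free)
  moreover have "order G dvd (\<Sum>x\<in>topspace X. card (minimal_closed X x))"
    using assms(7) card_minimal_closed_homeomorphic_map[OF assms(6)] assms(1,4)
    by (rule order_dvd_sum_invariant_free)
  ultimately show ?thesis ..
qed

end
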